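(* Let $X$ be a nonempty set and $d$ a triangular symmetric on $X$ such that $(X,d)$ is 0-complete. Let $T:X\to X$, $G\in\{M_1,M_2\}$, and suppose $d(Tx,Ty)\le\varphi(G(x,y))$ for all $x,y\in X$, for some nearly right admissible asymptotic normal function $\varphi:[0,\infty)\to[0,\infty)$. Then $T$ is a global Picard operator (modulo $d$).
   Context: A symmetric on $X$ is a map $d:X\times X\to[0,\infty)$ with $d(x,y)=d(y,x)$; it is triangular if $d(x,z)\le d(x,y)+d(y,z)$ for all $x,y,z$. A sequence $(x_n)$ $0d$-converges to $x$ if $d(x_n,x)\to0$; it is $0d$-convergent if such $x$ exists; it is $0d$-Cauchy if for every $\varepsilon>0$ there is $j$ with $d(x_m,x_n)<\varepsilon$ whenever $j\le m<n$. $(X,d)$ is 0-complete if every $0d$-Cauchy sequence is $0d$-convergent. A nonempty $Y\subseteq X$ is $d$-singleton if $d(y_1,y_2)=0$ for all $y_1,y_2\in Y$. $\mathrm{Fix}(T;d)=\{z: d(z,Tz)=0\}$. $T$ is a global Picard operator (modulo $d$) if for every $x\in X$ the sequence $(T^nx)$ is $0d$-convergent and every point to which it $0d$-converges lies in $\mathrm{Fix}(T;d)$, and moreover $\mathrm{Fix}(T;d)$ is $d$-singleton. Notation: $M_1(x,y)=d(x,y)$, $H(x,y)=\max\{d(x,Tx),d(y,Ty)\}$, $M_2=\max\{M_1,H\}$. $\varphi$ is normal if $\varphi(0)=0$ and $\varphi(t)<t$ for $t>0$; asymptotic normal if normal and every sequence $(r_n)$ in $[0,\infty)$ with $r_{n+1}\le\varphi(r_n)$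 for all $n$ tends to $0$; nearly right admissible if normal and there is a countable $Q\subseteq(0,\infty)$ with $\max\{\limsup_{t\to s+}\varphi(t),\varphi(s)\}<s$ for all $s\in(0,\infty)\setminus Q$. *)

theory Defs
  imports "HOL-Analysis.Analysis"
begin

definition symmetric_on :: "'a set \<Rightarrow> ('a \<Rightarrow> 'a \<Rightarrow> real) \<Rightarrow> bool" where
  "symmetric_on X d \<longleftrightarrow> (\<forall>x\<in>X. \<forall>y\<in>X. d x y \<ge> 0 \<and> d x y = d y x)"

definition triangular_on :: "'a set \<Rightarrow> ('a \<Rightarrow> 'a \<Rightarrow> real) \<Rightarrow> bool" where
  "triangular_on X d \<longleftrightarrow> (\<forall>x\<in>X. \<forall>y\<in>X. \<forall>z\<in>X. d x z \<le> d x y + d y z)"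

definition zd_converges :: "('a \<Rightarrow> 'a \<Rightarrow> real) \<Rightarrow> (nat \<Rightarrow> 'a) \<Rightarrow> 'a \<Rightarrow> bool" where
  "zd_converges d s x \<longleftrightarrow> ((\<lambda>n. d (s n) x) \<longlonglongrightarrow> 0)"

definition zd_convergent :: "'a set \<Rightarrow> ('a \<Rightarrow> 'a \<Rightarrow> real) \<Rightarrow> (nat \<Rightarrow> 'a) \<Rightarrow> bool" where
  "zd_convergent X d s \<longleftrightarrow> (\<exists>x\<in>X. zd_converges d s x)"

definition zd_Cauchy :: "('a \<Rightarrow> 'a \<Rightarrow> real) \<Rightarrow> (nat \<Rightarrow> 'a) \<Rightarrow> bool" where
  "zd_Cauchy d s \<longleftrightarrow> (\<forall>e>0. \<exists>j. \<forall>m n. j \<le> m \<and> m < n \<longrightarrow> d (s m) (s n) < e)"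

definition zero_complete :: "'a set \<Rightarrow> ('a \<Rightarrow> 'a \<Rightarrow> real) \<Rightarrow> bool" where
  "zero_complete X d \<longleftrightarrow>
     (\<forall>s. (\<forall>n. s n \<in> X) \<longrightarrow> zd_Cauchy d s \<longrightarrow> zd_convergent X d s)"

definition d_singleton :: "('a \<Rightarrow> 'a \<Rightarrow> real) \<Rightarrow> 'a set \<Rightarrow> bool" where
  "d_singleton d Y \<longleftrightarrow> Y \<noteq> {} \<and> (\<forall>y1\<in>Y. \<forall>y2\<in>Y. d y1 y2 = 0)"

definition Fix_d :: "'a set \<Rightarrow> ('a \<Rightarrow> 'a) \<Rightarrow> ('a \<Rightarrow> 'a \<Rightarrow> real) \<Rightarrow> 'a set" where
  "Fix_d X T d = {z\<in>X. d z (T z) = 0}"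

definition global_Picard :: "'a set \<Rightarrow> ('a \<Rightarrow> 'a \<Rightarrow> real) \<Rightarrow> ('a \<Rightarrow> 'a) \<Rightarrow> bool" where
  "global_Picard X d T \<longleftrightarrow>
     (\<forall>x\<in>X. zd_convergent X d (\<lambda>n. (T ^^ n) x) \<and>
        (\<forall>z\<in>X. zd_converges d (\<lambda>n. (T ^^ n) x) z \<longrightarrow> z \<in> Fix_d X T d))
     \<and> d_singleton d (Fix_d X T d)"

definition M1 :: "('a \<Rightarrow> 'a \<Rightarrow> real) \<Rightarrow> 'a \<Rightarrow> 'a \<Rightarrow> real" where
  "M1 d x y = d x y"

definition Hfun :: "('a \<Rightarrow> 'a \<Rightarrow> real) \<Rightarrow> ('a \<Rightarrow> 'a) \<Rightarrow> 'a \<Rightarrow> 'a \<Rightarrow> real" where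
  "Hfun d T x y = max (d x (T x)) (d y (T y))"

definition M2 :: "('a \<Rightarrow> 'a \<Rightarrow> real) \<Rightarrow> ('a \<Rightarrow> 'a) \<Rightarrow> 'a \<Rightarrow> 'a \<Rightarrow> real" where
  "M2 d T x y = max (M1 d x y) (Hfun d T x y)"

definition normal_fun :: "(real \<Rightarrow> real) \<Rightarrow> bool" where
  "normal_fun \<phi> \<longleftrightarrow> \<phi> 0 = 0 \<and> (\<forall>t>0. \<phi> t < t)"

definition asymptotic_normal :: "(real \<Rightarrow> real) \<Rightarrow> bool" where
  "asymptotic_normal \<phi> \<longleftrightarrow> normal_fun \<phi> \<and>
     (\<forall>r::nat \<Rightarrow> real. (\<forall>n. r n \<ge> 0) \<longrightarrow> (\<forall>n. r (Suc n) \<le> \<phi> (r n)) \<longrightarrow> r \<longlonglongrightarrow> 0)"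

definition nearly_right_admissible :: "(real \<Rightarrow> real) \<Rightarrow> bool" where
  "nearly_right_admissible \<phi> \<longleftrightarrow> normal_fun \<phi> \<and>
     (\<exists>Q. countable Q \<and> Q \<subseteq> {0<..} \<and>
        (\<forall>s. s > 0 \<longrightarrow> s \<notin> Q \<longrightarrow>
           max (Limsup (at_right s) (\<lambda>t. ereal (\<phi> t))) (ereal (\<phi> s)) < ereal s))"

end

theory Submission
  imports Defs
begin

text \<open>
  The successive distances \<open>a\<^sub>n = d(T\<^sup>n x, T\<^sup>n\<^sup>+\<^sup>1 x)\<close> satisfy \<open>a\<^sub>n\<^sub>+\<^sub>1 \<le> \<phi>(a\<^sub>n)\<close>, so they
  tend to 0 because \<phi> is asymptotic. Near admissibility supplies, below any \<open>\<epsilon>\<close>, a radius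
  \<open>s\<close> and a level \<open>c < s\<close> with \<open>\<phi> \<le> c\<close> on some \<open>[s, b)\<close>; once the \<open>a\<^sub>n\<close> are small, an
  iterate cannot leave the \<open>s\<close>-neighbourhood of \<open>T\<^sup>m x\<close>, since at the first escape the
  contraction would pull the distance back below \<open>c\<close> plus two small steps, i.e. below
  \<open>s\<close>. Hence the orbit is 0d-Cauchy and converges by 0-completeness; the triangle inequality
  through the orbit shows that every limit is a fixed point modulo \<open>d\<close>, and
  \<open>d(u,v) \<le> \<phi>(d(u,v))\<close> forces fixed points to be at distance 0.
\<close>

lemma nearly_right_admissible_obtains_level:
  assumes "nearly_right_admissible \<phi>" and "e > 0"
  obtains s c b where "0 < s" "s \<le> e" "c < s" "s < b" "\<And>t. s \<le> t \<Longrightarrow> t < b \<Longrightarrow> \<phi> t \<le> c"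
proof -
  obtain Q where Q: "countable Q" "\<forall>s. s > 0 \<longrightarrow> s \<notin> Q \<longrightarrow>
           max (Limsup (at_right s) (\<lambda>t. ereal (\<phi> t))) (ereal (\<phi> s)) < ereal s"
    using assms(1) unfolding nearly_right_admissible_def by blast
  have "\<not> {0<..<e} \<subseteq> Q"
    using uncountable_open_interval[of 0 e] assms(2) Q(1) countable_subset by blast
  then obtain s where "s \<in> {0<..<e}" "s \<notin> Q" by blast
  then have s: "0 < s" "s < e" "s \<notin> Q" by auto
  then have limsup: "Limsup (at_right s) (\<lambda>t. ereal (\<phi> t)) < ereal s" and "\<phi> s < s"
    using Q(2) by auto
  obtain c0 where c0: "Limsup (at_right s) (\<lambda>t. ereal (\<phi> t)) < ereal c0" "c0 < s"
  proof (cases "Limsup (at_right s) (\<lambda>t. ereal (\<phi> t))")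
    case (real r)
    then show ?thesis using that[of "(r + s) / 2"] limsup by auto
  next
    case PInf
    then show ?thesis using limsup by auto
  next
    case MInf
    then show ?thesis using that[of "s - 1"] by auto
  qed
  have "eventually (\<lambda>t. ereal (\<phi> t) < ereal c0) (at_right s)"
    using Limsup_lessD[OF c0(1)] .
  then obtain b where "b > s" "\<And>t. s < t \<Longrightarrow> t < b \<Longrightarrow> \<phi> t < c0"
    unfolding eventually_at_right_field by auto
  then show thesis
    using that[of s "max c0 (\<phi> s)" b] s \<open>\<phi> s < s\<close> c0(2) by (force simp: order_le_less)
qed

locale phi_contraction =
  fixes X :: "'a set" and d :: "'a \<Rightarrow> 'a \<Rightarrow> real" and T :: "'a \<Rightarrow> 'a"
    and G :: "'a \<Rightarrow> 'a \<Rightarrow> real" and \<phi> :: "real \<Rightarrow> real"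
  assumes symmetric: "symmetric_on X d"
    and triangular: "triangular_on X d"
    and maps_into: "T ` X \<subseteq> X"
    and G_cases: "G = M1 d \<or> G = M2 d T"
    and normal: "normal_fun \<phi>"
    and contraction: "\<forall>x\<in>X. \<forall>y\<in>X. d (T x) (T y) \<le> \<phi> (G x y)"
begin

lemma dist_nonneg: "x \<in> X \<Longrightarrow> y \<in> X \<Longrightarrow> 0 \<le> d x y"
  using symmetric unfolding symmetric_on_def by blast

lemma dist_commute: "x \<in> X \<Longrightarrow> y \<in> X \<Longrightarrow> d x y = d y x"
  using symmetric unfolding symmetric_on_def by blast

lemma dist_triangle: "x \<in> X \<Longrightarrow> y \<in> X \<Longrightarrow> z \<in> X \<Longrightarrow> d x z \<le> d x y + d y z"
  using triangular unfolding triangular_on_def by blast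

lemma phi_less: "t > 0 \<Longrightarrow> \<phi> t < t"
  using normal unfolding normal_fun_def by blast

lemma phi_le:
  assumes "t \<ge> 0"
  shows "\<phi> t \<le> t"
proof (cases "t = 0")
  case True
  then show ?thesis using normal by (simp add: normal_fun_def)
next
  case False
  then show ?thesis using assms phi_less[of t] by simp
qed

lemma T_in: "x \<in> X \<Longrightarrow> T x \<in> X"
  using maps_into by blast

lemma funpow_in: "x \<in> X \<Longrightarrow> (T ^^ n) x \<in> X"
  by (induction n) (auto intro: T_in)

lemma contraction_dist: "x \<in> X \<Longrightarrow> y \<in> X \<Longrightarrow> d (T x) (T y) \<le> \<phi> (G x y)"
  using contraction by blast

lemma dist_le_G: "x \<in> X \<Longrightarrow> y \<in> X \<Longrightarrow> d x y \<le> G x y"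
  using G_cases by (auto simp: M1_def M2_def)

lemma G_le_max: "G x y \<le> max (d x y) (max (d x (T x)) (d y (T y)))"
  using G_cases by (auto simp: M1_def M2_def Hfun_def)

lemma dist_funpow_Suc_le:
  assumes x: "x \<in> X"
  shows "d ((T ^^ Suc n) x) ((T ^^ Suc (Suc n)) x) \<le> \<phi> (d ((T ^^ n) x) ((T ^^ Suc n) x))"
proof -
  let ?p = "(T ^^ n) x"
  have p: "?p \<in> X" "T ?p \<in> X" using funpow_in[OF x] T_in by blast+
  define a where "a = d ?p (T ?p)"
  define a' where "a' = d (T ?p) (T (T ?p))"
  define g where "g = G ?p (T ?p)"
  have contr: "a' \<le> \<phi> g" using contraction_dist[OF p] by (simp add: a'_def g_def)
  have g_bounds: "a \<le> g" "g \<le> max a a'"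
    using dist_le_G[OF p] G_le_max[of ?p "T ?p"] by (auto simp: a_def a'_def g_def)
  have "0 \<le> a" using dist_nonneg[OF p] by (simp add: a_def)
  have "a' \<le> a"
  proof (rule ccontr)
    assume "\<not> a' \<le> a"
    then have "g \<le> a'" using g_bounds(2) by simp
    show False
    proof (cases "g > 0")
      case True
      then show False using contr phi_less[of g] \<open>g \<le> a'\<close> by simp
    next
      case False
      then have "g = 0" using g_bounds(1) \<open>0 \<le> a\<close> by simp
      then show False using contr normal \<open>\<not> a' \<le> a\<close> \<open>0 \<le> a\<close>
        by (simp add: normal_fun_def)
    qed
  qed
  then have "g = a" using g_bounds by simp
  then show ?thesis using contr by (simp add: a_def a'_def)
qed

lemma dist_funpow_Suc_tendsto_zero:
  assumes "asymptotic_normal \<phi>" and x: "x \<in> X"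
  shows "(\<lambda>n. d ((T ^^ n) x) ((T ^^ Suc n) x)) \<longlonglongrightarrow> 0"
proof -
  have "\<And>r. (\<forall>n. r n \<ge> 0) \<Longrightarrow> (\<forall>n. r (Suc n) \<le> \<phi> (r n)) \<Longrightarrow> r \<longlonglongrightarrow> 0"
    using assms(1) by (simp add: asymptotic_normal_def)
  then show ?thesis
    by this (use dist_funpow_Suc_le[OF x] in \<open>auto intro: dist_nonneg T_in funpow_in[OF x]\<close>)
qed

lemma dist_funpow_stays_below:
  assumes x: "x \<in> X"
    and phi_bound: "\<And>t. s \<le> t \<Longrightarrow> t < b \<Longrightarrow> \<phi> t \<le> c"
    and eta: "0 < s" "\<eta> \<le> b - s" "2 * \<eta> \<le> s - c"
    and small: "d ((T ^^ m) x) ((T ^^ Suc m) x) < \<eta>" "d ((T ^^ k) x) ((T ^^ Suc k) x) < \<eta>"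
      "d ((T ^^ Suc k) x) ((T ^^ Suc (Suc k)) x) < \<eta>"
    and close: "d ((T ^^ m) x) ((T ^^ k) x) < s"
  shows "d ((T ^^ m) x) ((T ^^ Suc k) x) < s"
proof (rule ccontr)
  let ?x = "\<lambda>n. (T ^^ n) x"
  have in_X: "\<And>n. ?x n \<in> X" using funpow_in[OF x] .
  define D where "D = d (?x m) (?x (Suc k))"
  assume "\<not> D < s"
  then have "s \<le> D" by (simp add: D_def)
  have "D \<le> d (?x m) (?x k) + d (?x k) (?x (Suc k))"
    unfolding D_def using dist_triangle in_X by blast
  with close small(2) eta(2) have "D < b" by linarith
  have "D \<le> G (?x m) (?x (Suc k))" "G (?x m) (?x (Suc k)) \<le> max D \<eta>"
    using dist_le_G[OF in_X[of m] in_X[of "Suc k"]] G_le_max[of "?x m" "?x (Suc k)"] small(1,3)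
    by (auto simp: D_def)
  moreover have "max D \<eta> < b" using \<open>D < b\<close> eta(1,2) by simp
  ultimately have "\<phi> (G (?x m) (?x (Suc k))) \<le> c"
    using \<open>s \<le> D\<close> by (intro phi_bound) auto
  then have far: "d (?x (Suc m)) (?x (Suc (Suc k))) \<le> c"
    using contraction_dist[OF in_X[of m] in_X[of "Suc k"]] by simp
  have "D \<le> d (?x m) (?x (Suc m)) + d (?x (Suc m)) (?x (Suc k))"
    unfolding D_def using dist_triangle in_X by blast
  also have "d (?x (Suc m)) (?x (Suc k))
      \<le> d (?x (Suc m)) (?x (Suc (Suc k))) + d (?x (Suc (Suc k))) (?x (Suc k))"
    using dist_triangle in_X by blast
  also have "d (?x (Suc (Suc k))) (?x (Suc k)) = d (?x (Suc k)) (?x (Suc (Suc k)))"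
    using dist_commute in_X by blast
  finally show False using far small(1,3) eta(3) \<open>s \<le> D\<close> by linarith
qed

lemma funpow_zd_Cauchy:
  assumes "nearly_right_admissible \<phi>" "asymptotic_normal \<phi>" and x: "x \<in> X"
  shows "zd_Cauchy d (\<lambda>n. (T ^^ n) x)"
  unfolding zd_Cauchy_def
proof (intro allI impI)
  fix e :: real
  assume "e > 0"
  obtain s c b where scb: "0 < s" "s \<le> e" "c < s" "s < b"
    and phi_bound: "\<And>t. s \<le> t \<Longrightarrow> t < b \<Longrightarrow> \<phi> t \<le> c"
    using nearly_right_admissible_obtains_level[OF assms(1) \<open>e > 0\<close>] by blast
  define \<eta> where "\<eta> = min s (min (b - s) ((s - c) / 2))"
  have "\<eta> > 0" "\<eta> \<le> s" "\<eta> \<le> b - s" "2 * \<eta> \<le> s - c"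
    using scb by (simp_all add: \<eta>_def min_def)
  then obtain N where N: "\<And>n. N \<le> n \<Longrightarrow> d ((T ^^ n) x) ((T ^^ Suc n) x) < \<eta>"
    using order_tendstoD(2)[OF dist_funpow_Suc_tendsto_zero[OF assms(2) x]]
    unfolding eventually_sequentially by blast
  have below: "d ((T ^^ m) x) ((T ^^ (Suc m + j)) x) < s" if "N \<le> m" for m j
  proof (induction j)
    case 0
    show ?case using N[OF that] \<open>\<eta> \<le> s\<close> by simp
  next
    case (Suc j)
    let ?k = "Suc m + j"
    have "N \<le> ?k" "N \<le> Suc ?k" using that by auto
    have "d ((T ^^ m) x) ((T ^^ Suc ?k) x) < s"
      by (rule dist_funpow_stays_below[OF x phi_bound \<open>0 < s\<close>])
        (use \<open>\<eta> \<le> b - s\<close> \<open>2 * \<eta> \<le> s - c\<close> N[OF that] N[OF \<open>N \<le> ?k\<close>]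
          N[OF \<open>N \<le> Suc ?k\<close>] Suc.IH in simp_all)
    then show ?case by simp
  qed
  show "\<exists>j. \<forall>m n. j \<le> m \<and> m < n \<longrightarrow> d ((T ^^ m) x) ((T ^^ n) x) < e"
  proof (intro exI allI impI)
    fix m n assume "N \<le> m \<and> m < n"
    then show "d ((T ^^ m) x) ((T ^^ n) x) < e"
      using below[of m "n - Suc m"] scb(2) by simp
  qed
qed

lemma dist_image_le_of_converges:
  assumes z: "z \<in> X" and in_X: "\<And>n. s n \<in> X" and conv: "zd_converges d s z"
    and bound: "eventually (\<lambda>n. d (s n) (T z) \<le> c) sequentially"
  shows "d z (T z) \<le> c"
proof (rule tendsto_le[OF trivial_limit_sequentially _ tendsto_const])
  show "((\<lambda>n. d (s n) z + c) \<longlongrightarrow> c) sequentially"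
    using tendsto_add[OF conv[unfolded zd_converges_def] tendsto_const, of c] by simp
  show "eventually (\<lambda>n. d z (T z) \<le> d (s n) z + c) sequentially"
    using bound
  proof eventually_elim
    case (elim n)
    have "d z (T z) \<le> d z (s n) + d (s n) (T z)" using dist_triangle z in_X T_in by blast
    then show ?case using elim dist_commute[OF z in_X] by simp
  qed
qed

lemma limit_of_funpow_in_Fix_d:
  assumes "asymptotic_normal \<phi>" and x: "x \<in> X" and z: "z \<in> X"
    and conv: "zd_converges d (\<lambda>n. (T ^^ n) x) z"
  shows "z \<in> Fix_d X T d"
proof (rule ccontr)
  let ?x = "\<lambda>n. (T ^^ n) x"
  have in_X: "\<And>n. ?x n \<in> X" using funpow_in[OF x] .
  define r where "r = d z (T z)"
  assume "z \<notin> Fix_d X T d"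
  then have "r > 0" using dist_nonneg[OF z T_in[OF z]] z by (auto simp: Fix_d_def r_def)
  have to_z: "(\<lambda>n. d (?x n) z) \<longlonglongrightarrow> 0" using conv by (simp add: zd_converges_def)
  have conv_Suc: "zd_converges d (\<lambda>n. ?x (Suc n)) z"
    using LIMSEQ_Suc[OF to_z] by (simp add: zd_converges_def del: funpow.simps)
  have step: "\<And>n. d (?x (Suc n)) (T z) \<le> \<phi> (G (?x n) z)"
    using contraction_dist[OF in_X z] by simp
  have "r \<le> c" if "eventually (\<lambda>n. \<phi> (G (?x n) z) \<le> c) sequentially" for c
  proof -
    have "eventually (\<lambda>n. d (?x (Suc n)) (T z) \<le> c) sequentially"
      using that by eventually_elim (rule order_trans[OF step])
    then show ?thesis unfolding r_def by (rule dist_image_le_of_converges[OF z in_X conv_Suc])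
  qed
  moreover obtain c where "c < r" "eventually (\<lambda>n. \<phi> (G (?x n) z) \<le> c) sequentially"
  proof (cases "G = M1 d")
    case True
    have "eventually (\<lambda>n. d (?x n) z < r / 2) sequentially"
      using order_tendstoD(2)[OF to_z, of "r / 2"] \<open>r > 0\<close> by simp
    then have "eventually (\<lambda>n. \<phi> (G (?x n) z) \<le> r / 2) sequentially"
    proof eventually_elim
      case (elim n)
      have "\<phi> (G (?x n) z) \<le> d (?x n) z"
        using True phi_le[OF dist_nonneg[OF in_X[of n] z]] by (simp add: M1_def)
      then show ?case using elim by simp
    qed
    then show thesis using that[of "r / 2"] \<open>r > 0\<close> by simp
  next
    case False
    then have G: "G = M2 d T" using G_cases by blast
    have "eventually (\<lambda>n. d (?x n) z < r \<and> d (?x n) (?x (Suc n)) < r) sequentially"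
      using order_tendstoD(2)[OF to_z \<open>r > 0\<close>]
        order_tendstoD(2)[OF dist_funpow_Suc_tendsto_zero[OF assms(1) x] \<open>r > 0\<close>]
      by eventually_elim simp
    then have "eventually (\<lambda>n. \<phi> (G (?x n) z) \<le> \<phi> r) sequentially"
      by eventually_elim (simp add: G M2_def M1_def Hfun_def r_def)
    then show thesis using that[of "\<phi> r"] phi_less[OF \<open>r > 0\<close>] by blast
  qed
  ultimately show False by fastforce
qed

lemma Fix_d_dist_zero:
  assumes u: "u \<in> Fix_d X T d" and v: "v \<in> Fix_d X T d"
  shows "d u v = 0"
proof -
  have uX: "u \<in> X" "d u (T u) = 0" and vX: "v \<in> X" "d v (T v) = 0"
    using u v by (auto simp: Fix_d_def)
  have "d u v \<le> d u (T u) + d (T u) v" using dist_triangle uX(1) vX(1) T_in by blast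
  also have "d (T u) v \<le> d (T u) (T v) + d (T v) v" using dist_triangle uX(1) vX(1) T_in by blast
  also have "d (T v) v = 0" using dist_commute vX T_in by metis
  finally have "d u v \<le> d (T u) (T v)" using uX by simp
  moreover have "G u v \<le> d u v"
    using G_le_max[of u v] uX vX dist_nonneg[OF uX(1) vX(1)] by simp
  then have "G u v = d u v" using dist_le_G[OF uX(1) vX(1)] by simp
  ultimately have "d u v \<le> \<phi> (d u v)" using contraction_dist[OF uX(1) vX(1)] by simp
  then show ?thesis using phi_less[of "d u v"] dist_nonneg[OF uX(1) vX(1)] by fastforce
qed

end

theorem theorem4:
  fixes X :: "'a set" and d :: "'a \<Rightarrow> 'a \<Rightarrow> real" and T :: "'a \<Rightarrow> 'a"
    and G :: "'a \<Rightarrow> 'a \<Rightarrow> real" and \<phi> :: "real \<Rightarrow> real"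
  assumes "X \<noteq> {}"
    and "symmetric_on X d" and "triangular_on X d"
    and "zero_complete X d"
    and "T ` X \<subseteq> X"
    and "G = M1 d \<or> G = M2 d T"
    and "\<forall>t\<ge>0. \<phi> t \<ge> 0"
    and "nearly_right_admissible \<phi>" and "asymptotic_normal \<phi>"
    and "\<forall>x\<in>X. \<forall>y\<in>X. d (T x) (T y) \<le> \<phi> (G x y)"
  shows "global_Picard X d T"
proof -
  interpret phi_contraction X d T G \<phi>
    using assms(2,3,5,6,9,10) by unfold_locales (auto simp: asymptotic_normal_def)
  have convergent: "zd_convergent X d (\<lambda>n. (T ^^ n) x)" if "x \<in> X" for x
    using assms(4) funpow_zd_Cauchy[OF assms(8,9) that] funpow_in[OF that]
    unfolding zero_complete_def by simp
  obtain x where "x \<in> X" using assms(1) by blast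
  then have "Fix_d X T d \<noteq> {}"
    using convergent limit_of_funpow_in_Fix_d[OF assms(9)] unfolding zd_convergent_def by blast
  then show ?thesis
    unfolding global_Picard_def d_singleton_def
    using convergent limit_of_funpow_in_Fix_d[OF assms(9)] Fix_d_dist_zero by blast
qed

end
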